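(* Let $\psi\in\mathbf{\Psi}_n$, and $\nu:=(\nu_1,\ldots,\nu_n)\in\mathbb{R}^n$ with $|\!|\!|\nu|\!|\!|_\psi=1$. Then $$\partial|\!|\!|\cdot|\!|\!|_{\psi}(\nu)=\big\{(\tau_1\gamma_1,\ldots,\tau_n\gamma_n)\in\mathbb{R}^n \mid \mu\in\partial\psi(t),\ \gamma_i:=\psi(t)+\langle \mu,\mathbf{e}_i-t\rangle\ge 0,\ \tau_i:={\rm sgn}(\nu_i)\ \text{if}\ \nu_i\ne 0\ \text{and}\ \tau_i\in\{-1,1\}\ \text{if}\ \nu_i=0\ (i=1,\ldots,n)\big\},$$ where $t:=\Big(\frac{|\nu_1|}{\sum_{i=1}^{n}|\nu_i|},\ldots,\frac{|\nu_n|}{\sum_{i=1}^{n}|\nu_i|}\Big)$.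
   Context: $\Omega_n:=\{t\in\mathbb{R}^n\mid t_i\ge0,\ \sum_i t_i=1\}$, $\Omega_n^\circ:=\{t\in\Omega_n\mid t_i<1\ \forall i\}$, $\mathbf{e}_i$ the standard unit vectors. $\mathbf{\Psi}_n$ is the class of convex continuous $\psi:\Omega_n\to\mathbb{R}$ with (B1) $\psi(\mathbf{e}_i)=1$ for all $i$ and (B2) $\psi(t)\ge(1-t_i)\psi\big(\frac{t_1}{1-t_i},\ldots,\frac{t_{i-1}}{1-t_i},0,\frac{t_{i+1}}{1-t_i},\ldots,\frac{t_n}{1-t_i}\big)$ for all $t\in\Omega_n^\circ$, $i=1,\ldots,n$. Here $|\!|\!|\cdot|\!|\!|_\psi$ is the norm on $\mathbb{R}^n$ given by $|\!|\!|\nu|\!|\!|_\psi:=\big(\sum_i|\nu_i|\big)\psi\big(\frac{|\nu_1|}{\sum_i|\nu_i|},\ldots,\frac{|\nu_n|}{\sum_i|\nu_i|}\big)$ for $\nu\ne0$ and $0$ at $0$. $\partial$ denotes the convex subdifferential (for $\psi$, the subdifferential of the convex function on $\Omega_n$); ${\rm sgn}$ is the sign function. *)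

theory Defs
  imports "HOL-Analysis.Analysis"
begin

definition simplex_Omega :: "(real ^ 'n) set" where
  "simplex_Omega = {t. (\<forall>i. t $ i \<ge> 0) \<and> (\<Sum>i\<in>UNIV. t $ i) = 1}"

definition simplex_Omega_int :: "(real ^ 'n) set" where
  "simplex_Omega_int = {t \<in> simplex_Omega. \<forall>i. t $ i < 1}"

definition Psi_class :: "((real ^ 'n) \<Rightarrow> real) set" where
  "Psi_class = {\<psi>. convex_on simplex_Omega \<psi> \<and> continuous_on simplex_Omega \<psi>
      \<and> (\<forall>i. \<psi> (axis i 1) = 1)
      \<and> (\<forall>t\<in>simplex_Omega_int. \<forall>i.
            \<psi> t \<ge> (1 - t $ i) * \<psi> (\<chi> j. if j = i then 0 else t $ j / (1 - t $ i)))}"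

definition abs_normalize :: "real ^ 'n \<Rightarrow> real ^ 'n" where
  "abs_normalize \<nu> = (\<chi> i. \<bar>\<nu> $ i\<bar> / (\<Sum>j\<in>UNIV. \<bar>\<nu> $ j\<bar>))"

definition psi_norm :: "((real ^ 'n) \<Rightarrow> real) \<Rightarrow> real ^ 'n \<Rightarrow> real" where
  "psi_norm \<psi> \<nu> = (if \<nu> = 0 then 0
     else (\<Sum>i\<in>UNIV. \<bar>\<nu> $ i\<bar>) * \<psi> (abs_normalize \<nu>))"

definition subdiff_on :: "(real ^ 'n) set \<Rightarrow> ((real ^ 'n) \<Rightarrow> real) \<Rightarrow> real ^ 'n \<Rightarrow> (real ^ 'n) set" where
  "subdiff_on D f x = {\<mu>. \<forall>y\<in>D. f y \<ge> f x + \<mu> \<bullet> (y - x)}"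

end

theory Submission
  imports Defs
begin

(* psi_norm \<psi> is positively homogeneous, so g is a subgradient at \<nu> exactly when
   g \<bullet> \<nu> = psi_norm \<psi> \<nu> and g \<bullet> y \<le> psi_norm \<psi> y for all y. Testing the latter on
   sign-adjusted points of the simplex shows that it means \<bar>g\<bar> \<bullet> u \<le> \<psi> u on \<Omega>; then
   g \<bullet> \<nu> \<le> \<bar>g\<bar> \<bullet> \<bar>\<nu>\<bar> \<le> psi_norm \<psi> \<nu>, and equality forces \<bar>g\<bar> \<bullet> t = \<psi> t and
   g_i \<nu>_i = \<bar>g_i\<bar> \<bar>\<nu>_i\<bar>. These linear minorants \<bar>g\<bar> of \<psi> touching it at t are exactly
   the vectors \<gamma> of the statement: \<gamma>_i is the value at the vertex e_i of the affine minorant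
   \<psi> t + \<mu> \<bullet> (u - t), which therefore equals \<gamma> \<bullet> u on \<Omega>. *)

lemma sum_abs_components_pos:
  fixes y :: "real ^ 'n"
  assumes "y \<noteq> 0"
  shows "0 < (\<Sum>j\<in>UNIV. \<bar>y $ j\<bar>)"
proof -
  obtain i where "y $ i \<noteq> 0" using assms by (metis vec_eq_iff zero_index)
  then have "0 < \<bar>y $ i\<bar>" by simp
  also have "\<dots> \<le> (\<Sum>j\<in>UNIV. \<bar>y $ j\<bar>)" by (rule member_le_sum) auto
  finally show ?thesis .
qed

lemma abs_normalize_in_simplex:
  fixes y :: "real ^ 'n"
  assumes "y \<noteq> 0"
  shows "abs_normalize y \<in> simplex_Omega"
  using sum_abs_components_pos[OF assms]
  by (simp add: simplex_Omega_def abs_normalize_def sum_divide_distrib[symmetric])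

lemma abs_eq_scaleR_abs_normalize:
  fixes y :: "real ^ 'n"
  assumes "y \<noteq> 0"
  shows "\<bar>y\<bar> = (\<Sum>j\<in>UNIV. \<bar>y $ j\<bar>) *\<^sub>R abs_normalize y"
  using sum_abs_components_pos[OF assms]
  by (simp add: abs_normalize_def abs_vec_def vec_eq_iff)

lemma psi_norm_scaleR_nonneg:
  assumes "0 \<le> c"
  shows "psi_norm \<psi> (c *\<^sub>R y) = c * psi_norm \<psi> y"
proof (cases "c = 0 \<or> y = 0")
  case False
  then have "abs_normalize (c *\<^sub>R y) = abs_normalize y"
    by (simp add: abs_normalize_def vec_eq_iff abs_mult sum_distrib_left[symmetric])
  with False assms show ?thesis
    by (simp add: psi_norm_def abs_mult sum_distrib_left)
qed (auto simp: psi_norm_def)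

lemma psi_norm_eq_on_simplex:
  assumes "u \<in> simplex_Omega" and "\<bar>y\<bar> = u"
  shows "psi_norm \<psi> y = \<psi> u"
proof -
  have sum_abs: "(\<Sum>j\<in>UNIV. \<bar>y $ j\<bar>) = 1"
    using assms by (auto simp: simplex_Omega_def abs_vec_def)
  then have "y \<noteq> 0" by auto
  moreover have "abs_normalize y = u"
    using sum_abs assms(2) by (auto simp: abs_normalize_def abs_vec_def)
  ultimately show ?thesis using sum_abs by (simp add: psi_norm_def)
qed

lemma subdiff_on_UNIV_pos_homogeneous_iff:
  fixes f :: "real ^ 'n \<Rightarrow> real"
  assumes homogeneous: "\<And>c y. 0 \<le> c \<Longrightarrow> f (c *\<^sub>R y) = c * f y"
  shows "g \<in> subdiff_on UNIV f x \<longleftrightarrow> g \<bullet> x = f x \<and> (\<forall>y. g \<bullet> y \<le> f y)"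
proof
  assume "g \<in> subdiff_on UNIV f x"
  then have sub: "\<And>y. f x + g \<bullet> (y - x) \<le> f y" by (simp add: subdiff_on_def)
  have "f 0 = 0" using homogeneous[of 0 0] by simp
  then have "f x \<le> g \<bullet> x" using sub[of 0] by (simp add: inner_diff_right)
  moreover have "g \<bullet> x \<le> f x"
    using sub[of "2 *\<^sub>R x"] homogeneous[of 2 x] by (simp add: inner_diff_right algebra_simps)
  ultimately have "g \<bullet> x = f x" by simp
  with sub show "g \<bullet> x = f x \<and> (\<forall>y. g \<bullet> y \<le> f y)"
    by (simp add: inner_diff_right)
qed (simp add: subdiff_on_def inner_diff_right)

lemma inner_le_inner_abs:
  fixes g y :: "real ^ 'n"
  shows "g \<bullet> y \<le> \<bar>g\<bar> \<bullet> \<bar>y\<bar>"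
  unfolding inner_vec_def abs_vec_def
  by (rule sum_mono) (simp add: abs_mult[symmetric])

lemma inner_eq_inner_abs_iff:
  fixes g y :: "real ^ 'n"
  shows "g \<bullet> y = \<bar>g\<bar> \<bullet> \<bar>y\<bar> \<longleftrightarrow> (\<forall>i. g $ i * y $ i = \<bar>g $ i\<bar> * \<bar>y $ i\<bar>)"
proof -
  have "g \<bullet> y = \<bar>g\<bar> \<bullet> \<bar>y\<bar> \<longleftrightarrow> (\<Sum>i\<in>UNIV. \<bar>g $ i\<bar> * \<bar>y $ i\<bar> - g $ i * y $ i) = 0"
    by (auto simp: inner_vec_def abs_vec_def sum_subtractf)
  also have "\<dots> \<longleftrightarrow> (\<forall>i. \<bar>g $ i\<bar> * \<bar>y $ i\<bar> - g $ i * y $ i = 0)"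
    by (subst sum_nonneg_eq_0_iff) (auto simp: abs_mult[symmetric])
  finally show ?thesis by (metis eq_iff_diff_eq_0)
qed

lemma inner_le_psi_norm_iff:
  fixes g :: "real ^ 'n"
  shows "(\<forall>y. g \<bullet> y \<le> psi_norm \<psi> y) \<longleftrightarrow> (\<forall>u\<in>simplex_Omega. \<bar>g\<bar> \<bullet> u \<le> \<psi> u)"
proof safe
  fix u :: "real ^ 'n"
  assume dual: "\<forall>y. g \<bullet> y \<le> psi_norm \<psi> y" and u: "u \<in> simplex_Omega"
  define y where "y = (\<chi> i. if g $ i < 0 then - u $ i else u $ i)"
  have "\<bar>y\<bar> = u" using u by (auto simp: y_def abs_vec_def simplex_Omega_def vec_eq_iff)
  moreover have "g \<bullet> y = \<bar>g\<bar> \<bullet> u"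
    unfolding inner_vec_def y_def abs_vec_def by (rule sum.cong) auto
  ultimately show "\<bar>g\<bar> \<bullet> u \<le> \<psi> u"
    using dual psi_norm_eq_on_simplex[OF u] by metis
next
  fix y :: "real ^ 'n"
  assume minorant: "\<forall>u\<in>simplex_Omega. \<bar>g\<bar> \<bullet> u \<le> \<psi> u"
  show "g \<bullet> y \<le> psi_norm \<psi> y"
  proof (cases "y = 0")
    case False
    define s where "s = (\<Sum>j\<in>UNIV. \<bar>y $ j\<bar>)"
    have "g \<bullet> y \<le> \<bar>g\<bar> \<bullet> \<bar>y\<bar>" by (rule inner_le_inner_abs)
    also have "\<dots> = s * (\<bar>g\<bar> \<bullet> abs_normalize y)"
      by (simp add: abs_eq_scaleR_abs_normalize[OF False] s_def)
    also have "\<dots> \<le> s * \<psi> (abs_normalize y)"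
      using minorant abs_normalize_in_simplex[OF False] sum_abs_components_pos[OF False]
      by (simp add: s_def)
    also have "\<dots> = psi_norm \<psi> y" using False by (simp add: psi_norm_def s_def)
    finally show ?thesis .
  qed (simp add: psi_norm_def)
qed

lemma subdiff_psi_norm_iff:
  fixes \<nu> g :: "real ^ 'n"
  assumes "\<nu> \<noteq> 0"
  shows "g \<in> subdiff_on UNIV (psi_norm \<psi>) \<nu> \<longleftrightarrow>
    (\<forall>u\<in>simplex_Omega. \<bar>g\<bar> \<bullet> u \<le> \<psi> u) \<and> \<bar>g\<bar> \<bullet> abs_normalize \<nu> = \<psi> (abs_normalize \<nu>)
    \<and> (\<forall>i. g $ i * \<nu> $ i = \<bar>g $ i\<bar> * \<bar>\<nu> $ i\<bar>)"
proof -
  define s where "s = (\<Sum>j\<in>UNIV. \<bar>\<nu> $ j\<bar>)"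
  define t where "t = abs_normalize \<nu>"
  have "0 < s" unfolding s_def by (rule sum_abs_components_pos[OF assms])
  have t_in_simplex: "t \<in> simplex_Omega" unfolding t_def by (rule abs_normalize_in_simplex[OF assms])
  have abs_\<nu>: "\<bar>g\<bar> \<bullet> \<bar>\<nu>\<bar> = s * (\<bar>g\<bar> \<bullet> t)"
    by (simp add: abs_eq_scaleR_abs_normalize[OF assms] s_def t_def)
  have "g \<in> subdiff_on UNIV (psi_norm \<psi>) \<nu> \<longleftrightarrow>
      g \<bullet> \<nu> = s * \<psi> t \<and> (\<forall>u\<in>simplex_Omega. \<bar>g\<bar> \<bullet> u \<le> \<psi> u)"
    using assms by (simp only: subdiff_on_UNIV_pos_homogeneous_iff[OF psi_norm_scaleR_nonneg]
        inner_le_psi_norm_iff) (simp add: psi_norm_def s_def t_def)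
  also have "\<dots> \<longleftrightarrow> (\<forall>u\<in>simplex_Omega. \<bar>g\<bar> \<bullet> u \<le> \<psi> u) \<and> \<bar>g\<bar> \<bullet> t = \<psi> t \<and> g \<bullet> \<nu> = \<bar>g\<bar> \<bullet> \<bar>\<nu>\<bar>"
  proof -
    have "g \<bullet> \<nu> = s * \<psi> t \<longleftrightarrow> \<bar>g\<bar> \<bullet> t = \<psi> t \<and> g \<bullet> \<nu> = \<bar>g\<bar> \<bullet> \<bar>\<nu>\<bar>"
      if "\<bar>g\<bar> \<bullet> t \<le> \<psi> t"
    proof -
      have "s * (\<bar>g\<bar> \<bullet> t) \<le> s * \<psi> t" using that \<open>0 < s\<close> by simp
      moreover have "s * (\<bar>g\<bar> \<bullet> t) = s * \<psi> t \<longleftrightarrow> \<bar>g\<bar> \<bullet> t = \<psi> t" using \<open>0 < s\<close> by simp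
      ultimately show ?thesis using inner_le_inner_abs[of g \<nu>] abs_\<nu> by linarith
    qed
    then show ?thesis using t_in_simplex by blast
  qed
  finally show ?thesis by (simp add: inner_eq_inner_abs_iff t_def)
qed

lemma inner_vertex_values:
  fixes \<mu> t u :: "real ^ 'n"
  assumes "(\<Sum>i\<in>UNIV. u $ i) = 1"
  shows "(\<chi> i. c + \<mu> \<bullet> (axis i 1 - t)) \<bullet> u = c + \<mu> \<bullet> (u - t)"
proof -
  have "(\<chi> i. c + \<mu> \<bullet> (axis i 1 - t)) = (\<chi> i. (c - \<mu> \<bullet> t) + \<mu> $ i)"
    by (simp add: vec_eq_iff inner_diff_right inner_axis)
  also have "\<dots> \<bullet> u = (c - \<mu> \<bullet> t) * (\<Sum>i\<in>UNIV. u $ i) + \<mu> \<bullet> u"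
    by (simp add: inner_vec_def distrib_right sum.distrib sum_distrib_left)
  finally show ?thesis using assms by (simp add: inner_diff_right)
qed

lemma vertex_values_linear_minorant:
  fixes \<mu> t :: "real ^ 'n"
  assumes "t \<in> simplex_Omega" and "\<mu> \<in> subdiff_on simplex_Omega \<psi> t"
  defines "\<gamma> \<equiv> \<chi> i. \<psi> t + \<mu> \<bullet> (axis i 1 - t)"
  shows "\<forall>u\<in>simplex_Omega. \<gamma> \<bullet> u \<le> \<psi> u" and "\<gamma> \<bullet> t = \<psi> t"
  using assms by (simp_all add: \<gamma>_def inner_vertex_values simplex_Omega_def subdiff_on_def)

lemma vertex_values_of_linear_minorant:
  fixes h t :: "real ^ 'n"
  assumes "h \<bullet> t = \<psi> t"
  shows "(\<chi> i. \<psi> t + h \<bullet> (axis i 1 - t)) = h"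
  using assms by (simp add: vec_eq_iff inner_diff_right inner_axis)

lemma sign_choice_mult:
  fixes b \<tau> :: real
  assumes "(b \<noteq> 0 \<longrightarrow> \<tau> = sgn b) \<and> (b = 0 \<longrightarrow> \<tau> \<in> {-1, 1})"
  shows "\<bar>\<tau>\<bar> = 1" and "\<tau> * b = \<bar>b\<bar>"
  using assms by (auto simp: sgn_if abs_if split: if_split_asm)

lemma mult_eq_abs_mult_iff_sgn:
  fixes a b :: real
  assumes "b \<noteq> 0"
  shows "a * b = \<bar>a\<bar> * \<bar>b\<bar> \<longleftrightarrow> a = sgn b * \<bar>a\<bar>"
  using assms by (cases "0 < b"; cases "0 \<le> a") (auto simp: abs_if sgn_if)

lemma signed_vertex_values_iff:
  fixes t \<nu> g :: "real ^ 'n"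
  assumes t_in_simplex: "t \<in> simplex_Omega"
  shows "(\<exists>\<mu> \<tau>. g = (\<chi> i. \<tau> i * (\<psi> t + \<mu> \<bullet> (axis i 1 - t)))
       \<and> \<mu> \<in> subdiff_on simplex_Omega \<psi> t
       \<and> (\<forall>i. \<psi> t + \<mu> \<bullet> (axis i 1 - t) \<ge> 0)
       \<and> (\<forall>i. (\<nu> $ i \<noteq> 0 \<longrightarrow> \<tau> i = sgn (\<nu> $ i)) \<and> (\<nu> $ i = 0 \<longrightarrow> \<tau> i \<in> {-1, 1})))
    \<longleftrightarrow> (\<forall>u\<in>simplex_Omega. \<bar>g\<bar> \<bullet> u \<le> \<psi> u) \<and> \<bar>g\<bar> \<bullet> t = \<psi> t
       \<and> (\<forall>i. g $ i * \<nu> $ i = \<bar>g $ i\<bar> * \<bar>\<nu> $ i\<bar>)"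
    (is "?signed \<longleftrightarrow> ?support")
proof
  assume ?signed
  then obtain \<mu> \<tau> where g: "g = (\<chi> i. \<tau> i * (\<psi> t + \<mu> \<bullet> (axis i 1 - t)))"
    and \<mu>: "\<mu> \<in> subdiff_on simplex_Omega \<psi> t"
    and nonneg: "\<And>i. \<psi> t + \<mu> \<bullet> (axis i 1 - t) \<ge> 0"
    and \<tau>: "\<And>i. (\<nu> $ i \<noteq> 0 \<longrightarrow> \<tau> i = sgn (\<nu> $ i)) \<and> (\<nu> $ i = 0 \<longrightarrow> \<tau> i \<in> {-1, 1})"
    by blast
  define \<gamma> where "\<gamma> = (\<chi> i. \<psi> t + \<mu> \<bullet> (axis i 1 - t))"
  have g_\<gamma>: "g $ i = \<tau> i * \<gamma> $ i" for i by (simp add: g \<gamma>_def)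
  have abs_g: "\<bar>g\<bar> = \<gamma>"
    using sign_choice_mult(1)[OF \<tau>] nonneg
    by (simp add: vec_eq_iff abs_vec_def g_\<gamma> abs_mult \<gamma>_def)
  have "g $ i * \<nu> $ i = \<bar>g $ i\<bar> * \<bar>\<nu> $ i\<bar>" for i
    using sign_choice_mult(2)[OF \<tau>[of i]] abs_g
    by (simp add: g_\<gamma> abs_vec_def vec_eq_iff)
  then show ?support
    using vertex_values_linear_minorant[OF t_in_simplex \<mu>] abs_g by (simp add: \<gamma>_def)
next
  assume ?support
  then have minorant: "\<And>u. u \<in> simplex_Omega \<Longrightarrow> \<bar>g\<bar> \<bullet> u \<le> \<psi> u"
    and touches: "\<bar>g\<bar> \<bullet> t = \<psi> t"
    and aligned: "\<And>i. g $ i * \<nu> $ i = \<bar>g $ i\<bar> * \<bar>\<nu> $ i\<bar>"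
    by auto
  define \<tau> where "\<tau> i = (if \<nu> $ i \<noteq> 0 then sgn (\<nu> $ i) else if g $ i < 0 then -1 else 1)" for i
  have vertex_values: "\<psi> t + \<bar>g\<bar> \<bullet> (axis i 1 - t) = \<bar>g $ i\<bar>" for i
    using vertex_values_of_linear_minorant[where \<psi> = \<psi>, OF touches]
    by (simp add: vec_eq_iff abs_vec_def)
  have "g $ i = \<tau> i * \<bar>g $ i\<bar>" for i
    using aligned[of i] mult_eq_abs_mult_iff_sgn[of "\<nu> $ i" "g $ i"] by (simp add: \<tau>_def)
  then have "g = (\<chi> i. \<tau> i * (\<psi> t + \<bar>g\<bar> \<bullet> (axis i 1 - t)))"
    by (simp add: vertex_values vec_eq_iff)
  moreover have "\<bar>g\<bar> \<in> subdiff_on simplex_Omega \<psi> t"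
    using minorant touches by (simp add: subdiff_on_def inner_diff_right)
  moreover have "\<psi> t + \<bar>g\<bar> \<bullet> (axis i 1 - t) \<ge> 0" for i
    by (simp add: vertex_values)
  moreover have "(\<nu> $ i \<noteq> 0 \<longrightarrow> \<tau> i = sgn (\<nu> $ i)) \<and> (\<nu> $ i = 0 \<longrightarrow> \<tau> i \<in> {-1, 1})" for i
    by (simp add: \<tau>_def)
  ultimately show ?signed by blast
qed

theorem lemma4p1:
  fixes \<psi> :: "real ^ 'n \<Rightarrow> real" and \<nu> :: "real ^ 'n"
  assumes "\<psi> \<in> Psi_class"
    and "psi_norm \<psi> \<nu> = 1"
  shows "subdiff_on UNIV (psi_norm \<psi>) \<nu> =
    {(\<chi> i. \<tau> i * (\<psi> (abs_normalize \<nu>) + \<mu> \<bullet> (axis i 1 - abs_normalize \<nu>))) | \<mu> \<tau>.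
       \<mu> \<in> subdiff_on simplex_Omega \<psi> (abs_normalize \<nu>)
       \<and> (\<forall>i. \<psi> (abs_normalize \<nu>) + \<mu> \<bullet> (axis i 1 - abs_normalize \<nu>) \<ge> 0)
       \<and> (\<forall>i. (\<nu> $ i \<noteq> 0 \<longrightarrow> \<tau> i = sgn (\<nu> $ i))
             \<and> (\<nu> $ i = 0 \<longrightarrow> \<tau> i \<in> {-1, 1}))}"
proof -
  have "\<nu> \<noteq> 0" using assms(2) by (auto simp: psi_norm_def)
  show ?thesis
    unfolding set_eq_iff mem_Collect_eq subdiff_psi_norm_iff[OF \<open>\<nu> \<noteq> 0\<close>]
      signed_vertex_values_iff[OF abs_normalize_in_simplex[OF \<open>\<nu> \<noteq> 0\<close>]] by simp
qed

end
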